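(* Let $N$ be a phylogenetic network on $X\subseteq[n]$ and let $i,j\in[n]$ be distinct. Then $(i,j)$ is reducible in $N$ (i.e. is a cherry or a reticulated-cherry of $N$) if and only if $(i,j)$ is reducible in $\boldsymbol\mu(N)$ (i.e. is a cherry or a reticulated-cherry of the multiset $\boldsymbol\mu(N)$).
   Context: A (binary) phylogenetic network on a finite set $X\subseteq[n]=\{1,\dots,n\}$ is a directed acyclic graph $N=(V,A)$ without parallel arcs in which every node is exactly one of: the root (indegree 0, outdegree 1; there is exactly one), a leaf (indegree 1, outdegree 0), a tree node (indegree 1, outdegree 2), or a reticulation (indegree 2, outdegree 1); the leaves are identified with the elements of $X$. $V_T(N)$ denotes the set of leaves and tree nodes, $V_H(N)$ the set of reticulations. $m(u,v)$ is the number of directed paths from $u$ to $v$ (trivial paths allowed). Extended $\mu$-vectors: $\mu_i(u)=m(u,i)$ for $i\in[n]$ (0 if $i\notin X$), $\mu_0(u)=\sum_{h\in V_H(N)} m(u,h)$, $\mu(u)=(\mu_0(u),\dots,\mu_n(u))$; $\boldsymbol\mu(N)$ is the multiset $\{\mu(u)\mid u\in V_T(N)\}$. $\delta_S$ is the 0/1 indicator vector of $S\subseteq\{0,\dots,n\}$ and $\delta_{j_1,\dots,j_k}=\delta_{\{j_1,\dots,j_k\}}$. For distinct leaves $i,j$ of $N$ with parents $p_i,p_j$, $(i,j)$ is a cherry of $N$ if $p_i=p_j$, and a reticulated-cherry of $N$ if $p_i$ is a reticulation, $p_j$ is a tree node and $p_j$ is a parent of $p_i$. For a finite multiset $\boldsymbol\mu$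 of vectors of nonnegative integers indexed by $0,\dots,n$ and distinct $i,j\in[n]$, $(i,j)$ is a cherry of $\boldsymbol\mu$ if $\delta_{i,j}$ belongs to $\boldsymbol\mu$ with multiplicity exactly 1 and every element $\mu$ of $\boldsymbol\mu$ other than $\delta_i,\delta_j$ satisfies $\mu_i=\mu_j$; $(i,j)$ is a reticulated-cherry of $\boldsymbol\mu$ if $\delta_{0,i,j}$ belongs to $\boldsymbol\mu$ with multiplicity exactly 1 and every element $\mu$ of $\boldsymbol\mu$ other than $\delta_i,\delta_j$ satisfies $\mu_0\ge\mu_i\ge\mu_j$. *)

theory Defs
  imports Main "HOL-Library.Multiset"
begin

text \<open>A network is given by a node set V, an arc set A (a set of pairs, so no
parallel arcs), and a labelling lab of the leaves by the elements of X.\<close>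

definition indeg :: "('v \<times> 'v) set \<Rightarrow> 'v \<Rightarrow> nat" where
  "indeg A v = card {u. (u, v) \<in> A}"

definition outdeg :: "('v \<times> 'v) set \<Rightarrow> 'v \<Rightarrow> nat" where
  "outdeg A v = card {w. (v, w) \<in> A}"

definition is_root :: "('v \<times> 'v) set \<Rightarrow> 'v \<Rightarrow> bool" where
  "is_root A v \<longleftrightarrow> indeg A v = 0 \<and> outdeg A v = 1"

definition is_leaf :: "('v \<times> 'v) set \<Rightarrow> 'v \<Rightarrow> bool" where
  "is_leaf A v \<longleftrightarrow> indeg A v = 1 \<and> outdeg A v = 0"

definition is_tree_node :: "('v \<times> 'v) set \<Rightarrow> 'v \<Rightarrow> bool" where
  "is_tree_node A v \<longleftrightarrow> indeg A v = 1 \<and> outdeg A v = 2"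

definition is_ret :: "('v \<times> 'v) set \<Rightarrow> 'v \<Rightarrow> bool" where
  "is_ret A v \<longleftrightarrow> indeg A v = 2 \<and> outdeg A v = 1"

definition leaves :: "'v set \<Rightarrow> ('v \<times> 'v) set \<Rightarrow> 'v set" where
  "leaves V A = {v \<in> V. is_leaf A v}"

definition VT :: "'v set \<Rightarrow> ('v \<times> 'v) set \<Rightarrow> 'v set" where
  "VT V A = {v \<in> V. is_leaf A v \<or> is_tree_node A v}"

definition VH :: "'v set \<Rightarrow> ('v \<times> 'v) set \<Rightarrow> 'v set" where
  "VH V A = {v \<in> V. is_ret A v}"

definition phylo_network ::
  "nat \<Rightarrow> nat set \<Rightarrow> 'v set \<Rightarrow> ('v \<times> 'v) set \<Rightarrow> ('v \<Rightarrow> nat) \<Rightarrow> bool" where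
  "phylo_network n X V A lab \<longleftrightarrow>
     finite V \<and> A \<subseteq> V \<times> V \<and> (\<forall>v. (v, v) \<notin> A\<^sup>+) \<and>
     card {v \<in> V. is_root A v} = 1 \<and>
     (\<forall>v \<in> V. is_root A v \<or> is_leaf A v \<or> is_tree_node A v \<or> is_ret A v) \<and>
     X \<subseteq> {1..n} \<and> bij_betw lab (leaves V A) X"

text \<open>Directed paths from u to v, as nonempty node lists (trivial path [u] allowed).\<close>
definition paths :: "('v \<times> 'v) set \<Rightarrow> 'v \<Rightarrow> 'v \<Rightarrow> 'v list set" where
  "paths A u v = {p. p \<noteq> [] \<and> hd p = u \<and> last p = v \<and>
                     (\<forall>k. Suc k < length p \<longrightarrow> (p ! k, p ! Suc k) \<in> A)}"

definition npaths :: "('v \<times> 'v) set \<Rightarrow> 'v \<Rightarrow> 'v \<Rightarrow> nat" where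
  "npaths A u v = card (paths A u v)"

text \<open>Extended mu-vector, as a function on indices 0..n (0 beyond n).
 mu_i(u) = m(u, leaf labelled i) (0 if i \<notin> X); mu_0(u) = sum over reticulations.\<close>
definition muvec ::
  "nat \<Rightarrow> 'v set \<Rightarrow> ('v \<times> 'v) set \<Rightarrow> ('v \<Rightarrow> nat) \<Rightarrow> 'v \<Rightarrow> nat \<Rightarrow> nat" where
  "muvec n V A lab u k =
     (if k = 0 then (\<Sum>h \<in> VH V A. npaths A u h)
      else if k \<le> n then (\<Sum>l \<in> {l \<in> leaves V A. lab l = k}. npaths A u l)
      else 0)"

definition mu_multiset ::
  "nat \<Rightarrow> 'v set \<Rightarrow> ('v \<times> 'v) set \<Rightarrow> ('v \<Rightarrow> nat) \<Rightarrow> (nat \<Rightarrow> nat) multiset" where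
  "mu_multiset n V A lab = image_mset (muvec n V A lab) (mset_set (VT V A))"

definition delta :: "nat set \<Rightarrow> nat \<Rightarrow> nat" where
  "delta S = (\<lambda>k. if k \<in> S then 1 else 0)"

definition net_cherry ::
  "'v set \<Rightarrow> ('v \<times> 'v) set \<Rightarrow> ('v \<Rightarrow> nat) \<Rightarrow> nat \<Rightarrow> nat \<Rightarrow> bool" where
  "net_cherry V A lab i j \<longleftrightarrow> i \<noteq> j \<and>
     (\<exists>li lj p. li \<in> leaves V A \<and> lj \<in> leaves V A \<and> lab li = i \<and> lab lj = j \<and>
        (p, li) \<in> A \<and> (p, lj) \<in> A)"

definition net_ret_cherry ::
  "'v set \<Rightarrow> ('v \<times> 'v) set \<Rightarrow> ('v \<Rightarrow> nat) \<Rightarrow> nat \<Rightarrow> nat \<Rightarrow> bool" where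
  "net_ret_cherry V A lab i j \<longleftrightarrow> i \<noteq> j \<and>
     (\<exists>li lj pi pj. li \<in> leaves V A \<and> lj \<in> leaves V A \<and> lab li = i \<and> lab lj = j \<and>
        (pi, li) \<in> A \<and> (pj, lj) \<in> A \<and> pi \<in> V \<and> pj \<in> V \<and>
        is_ret A pi \<and> is_tree_node A pj \<and> (pj, pi) \<in> A)"

definition ms_cherry :: "(nat \<Rightarrow> nat) multiset \<Rightarrow> nat \<Rightarrow> nat \<Rightarrow> bool" where
  "ms_cherry M i j \<longleftrightarrow> count M (delta {i, j}) = 1 \<and>
     (\<forall>m \<in># M. m \<noteq> delta {i} \<and> m \<noteq> delta {j} \<longrightarrow> m i = m j)"

definition ms_ret_cherry :: "(nat \<Rightarrow> nat) multiset \<Rightarrow> nat \<Rightarrow> nat \<Rightarrow> bool" where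
  "ms_ret_cherry M i j \<longleftrightarrow> count M (delta {0, i, j}) = 1 \<and>
     (\<forall>m \<in># M. m \<noteq> delta {i} \<and> m \<noteq> delta {j} \<longrightarrow> m 0 \<ge> m i \<and> m i \<ge> m j)"

end

theory Submission
  imports Defs
begin

text \<open>
  A node u of \<open>V\<^sub>T\<close> with \<open>\<mu>(u) = \<delta>{i,j}\<close> or \<open>\<delta>{0,i,j}\<close> reaches the leaves i and j along
  exactly one path each, no other leaf, and at most one reticulation. As every node reaches
  some leaf, u is a tree node each of whose two children reaches just one of the two leaves,
  along a single path; such a child is that leaf or a reticulation directly above it, and the
  count of reticulations below u decides which. So u is the parent of a cherry, resp. of a
  reticulated cherry in one of its two orientations; conversely those parents carry exactly
  these vectors, which are therefore unique in \<open>\<mu>(N)\<close>. The remaining conditions on \<open>\<mu>(N)\<close>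
  compare path counts through the unique parents of the leaves i and j; in the wrong
  orientation, a tree-node ancestor of the reticulation's other parent has more paths to j
  than to i.
\<close>

section \<open>Counting paths in finite acyclic relations\<close>

lemma paths_Cons_iff:
  "x # p \<in> paths A u v \<longleftrightarrow>
     x = u \<and> (p = [] \<and> u = v \<or> p \<noteq> [] \<and> (u, hd p) \<in> A \<and> p \<in> paths A (hd p) v)"
proof (cases p)
  case (Cons y ys)
  have "(\<forall>k. Suc k < length (x # p) \<longrightarrow> ((x # p) ! k, (x # p) ! Suc k) \<in> A) \<longleftrightarrow>
        (\<forall>k < Suc (length ys). ((x # p) ! k, (x # p) ! Suc k) \<in> A)"
    using Cons by auto
  also have "\<dots> \<longleftrightarrow> (x, y) \<in> A \<and> (\<forall>k. Suc k < length p \<longrightarrow> (p ! k, p ! Suc k) \<in> A)"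
    unfolding All_less_Suc2 using Cons by auto
  finally show ?thesis using Cons by (auto simp: paths_def)
qed (auto simp: paths_def)

lemma paths_imp_rtrancl: "p \<in> paths A u v \<Longrightarrow> (u, v) \<in> A\<^sup>*"
proof (induction p arbitrary: u)
  case Nil then show ?case by (simp add: paths_def)
next
  case (Cons x p) then show ?case
    by (auto simp: paths_Cons_iff intro: converse_rtrancl_into_rtrancl)
qed

lemma paths_refl:
  assumes "acyclic A"
  shows "paths A v v = {[v]}"
proof (intro equalityI subsetI)
  fix p assume p: "p \<in> paths A v v"
  then obtain x q where "p = x # q" by (cases p) (auto simp: paths_def)
  with p have q: "p = v # q" by (simp add: paths_Cons_iff)
  have "q = []"
  proof (rule ccontr)
    assume "q \<noteq> []"
    with p q have "(v, hd q) \<in> A" "(hd q, v) \<in> A\<^sup>*"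
      by (auto simp: paths_Cons_iff dest: paths_imp_rtrancl)
    with assms show False by (meson acyclic_def rtrancl_into_trancl2)
  qed
  with q show "p \<in> {[v]}" by simp
qed (simp add: paths_def)

lemma paths_unfold:
  assumes "u \<noteq> v"
  shows "paths A u v = (\<Union>c \<in> {c. (u, c) \<in> A}. Cons u ` paths A c v)"
proof (intro equalityI subsetI)
  fix p assume p: "p \<in> paths A u v"
  then obtain x q where "p = x # q" by (cases p) (auto simp: paths_def)
  with p assms have "p = u # q" "(u, hd q) \<in> A" "q \<in> paths A (hd q) v"
    by (auto simp: paths_Cons_iff)
  then show "p \<in> (\<Union>c \<in> {c. (u, c) \<in> A}. Cons u ` paths A c v)" by blast
next
  fix p assume "p \<in> (\<Union>c \<in> {c. (u, c) \<in> A}. Cons u ` paths A c v)"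
  then obtain c q where "(u, c) \<in> A" "q \<in> paths A c v" "p = u # q" by blast
  moreover from this have "q \<noteq> []" "hd q = c" by (auto simp: paths_def)
  ultimately show "p \<in> paths A u v" by (simp add: paths_Cons_iff)
qed

lemma rev_in_paths_converse: "p \<in> paths A u v \<Longrightarrow> rev p \<in> paths (A\<inverse>) v u"
proof -
  assume p: "p \<in> paths A u v"
  have "(rev p ! k, rev p ! Suc k) \<in> A\<inverse>" if k: "Suc k < length p" for k
  proof -
    define k' where "k' = length p - Suc (Suc k)"
    have "Suc k' = length p - Suc k" using k by (simp add: k'_def)
    moreover have "(p ! k', p ! Suc k') \<in> A" using p k by (auto simp: paths_def k'_def)
    ultimately show ?thesis using k by (simp add: rev_nth k'_def)
  qed
  with p show ?thesis by (auto simp: paths_def hd_rev last_rev)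
qed

lemma finite_successors: "finite A \<Longrightarrow> finite {c. (u, c) \<in> A}"
  using finite_Image[of A "{u}"] by (simp add: Image_singleton)

lemma finite_paths:
  assumes "finite A" "acyclic A"
  shows "finite (paths A u v)"
  using finite_acyclic_wf_converse[OF assms]
proof (induction u rule: wf_induct_rule)
  case (less u)
  show ?case
  proof (cases "u = v")
    case True then show ?thesis by (simp add: paths_refl[OF assms(2)])
  next
    case False then show ?thesis
      using less finite_successors[OF assms(1)] by (simp add: paths_unfold)
  qed
qed

lemma npaths_refl: "acyclic A \<Longrightarrow> npaths A v v = 1"
  by (simp add: npaths_def paths_refl)

lemma npaths_unfold:
  assumes "finite A" "acyclic A" "u \<noteq> v"
  shows "npaths A u v = (\<Sum>c \<in> {c. (u, c) \<in> A}. npaths A c v)"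
proof -
  have "npaths A u v = (\<Sum>c \<in> {c. (u, c) \<in> A}. card (Cons u ` paths A c v))"
    unfolding npaths_def paths_unfold[OF assms(3)]
    using finite_successors[OF assms(1)] finite_paths[OF assms(1,2)]
    by (intro card_UN_disjoint) (auto simp: paths_def)
  then show ?thesis by (simp add: npaths_def card_image)
qed

lemma npaths_converse: "npaths (A\<inverse>) v u = npaths A u v"
proof -
  have "paths (A\<inverse>) v u = rev ` paths A u v"
  proof (intro equalityI subsetI)
    fix p assume "p \<in> paths (A\<inverse>) v u"
    then have "rev p \<in> paths A u v" using rev_in_paths_converse[of p "A\<inverse>"] by simp
    then show "p \<in> rev ` paths A u v" by (metis image_eqI rev_rev_ident)
  qed (auto intro: rev_in_paths_converse)
  then show ?thesis by (simp add: npaths_def card_image)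
qed

lemma npaths_unfold_pred:
  assumes "finite A" "acyclic A" "u \<noteq> v"
  shows "npaths A u v = (\<Sum>c \<in> {c. (c, v) \<in> A}. npaths A u c)"
  using npaths_unfold[of "A\<inverse>" v u] assms by (simp add: npaths_converse)

lemma npaths_successor_le:
  assumes "finite A" "acyclic A" "(u, c) \<in> A" "u \<noteq> v"
  shows "npaths A c v \<le> npaths A u v"
  using assms finite_successors[OF assms(1)] by (auto simp: npaths_unfold intro: member_le_sum)

lemma npaths_predecessor_le:
  assumes "finite A" "acyclic A" "(c, v) \<in> A" "u \<noteq> v"
  shows "npaths A u c \<le> npaths A u v"
  using npaths_successor_le[of "A\<inverse>" v c u] assms by (simp add: npaths_converse)

lemma npaths_pos_iff:
  assumes "finite A" "acyclic A"
  shows "0 < npaths A u v \<longleftrightarrow> (u, v) \<in> A\<^sup>*"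
proof
  assume "0 < npaths A u v"
  then obtain p where "p \<in> paths A u v" by (auto simp: npaths_def card_gt_0_iff)
  then show "(u, v) \<in> A\<^sup>*" by (rule paths_imp_rtrancl)
next
  assume "(u, v) \<in> A\<^sup>*"
  then show "0 < npaths A u v"
  proof (induction rule: converse_rtrancl_induct)
    case base then show ?case by (simp add: npaths_refl[OF assms(2)])
  next
    case (step y z)
    then show ?case
      using npaths_successor_le[OF assms, of y z v] npaths_refl[OF assms(2), of v]
      by (cases "y = v") auto
  qed
qed

section \<open>Path counts in phylogenetic networks\<close>

locale phylo_net =
  fixes n :: nat and X :: "nat set" and V :: "'v set" and A :: "('v \<times> 'v) set"
    and lab :: "'v \<Rightarrow> nat"
  assumes phylo_network: "phylo_network n X V A lab"
begin

abbreviation m :: "'v \<Rightarrow> 'v \<Rightarrow> nat" where "m \<equiv> npaths A"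
abbreviation ret_paths :: "'v \<Rightarrow> nat" where "ret_paths u \<equiv> \<Sum>h \<in> VH V A. m u h"
abbreviation mu :: "'v \<Rightarrow> nat \<Rightarrow> nat" where "mu \<equiv> muvec n V A lab"

lemma finite_V: "finite V"
  using phylo_network by (simp add: phylo_network_def)

lemma arc_nodes: "(x, y) \<in> A \<Longrightarrow> x \<in> V \<and> y \<in> V"
  using phylo_network by (auto simp: phylo_network_def)

lemma finite_A: "finite A"
  using phylo_network finite_V by (auto simp: phylo_network_def intro: finite_subset)

lemma acyclic_A: "acyclic A"
  using phylo_network by (simp add: phylo_network_def acyclic_def)

lemma node_cases: "v \<in> V \<Longrightarrow> is_root A v \<or> is_leaf A v \<or> is_tree_node A v \<or> is_ret A v"
  using phylo_network by (simp add: phylo_network_def)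

lemma node_kinds_disjoint:
  "is_leaf A v \<Longrightarrow> \<not> is_tree_node A v \<and> \<not> is_ret A v \<and> \<not> is_root A v"
  "is_tree_node A v \<Longrightarrow> \<not> is_ret A v \<and> \<not> is_root A v"
  "is_ret A v \<Longrightarrow> \<not> is_root A v"
  by (auto simp: is_leaf_def is_tree_node_def is_ret_def is_root_def)

lemma root_unique:
  assumes "r \<in> V" "r' \<in> V" "is_root A r" "is_root A r'"
  shows "r = r'"
proof -
  obtain x where "{v \<in> V. is_root A v} = {x}"
    using phylo_network by (auto simp: phylo_network_def card_1_singleton_iff)
  with assms show ?thesis by (metis (mono_tags, lifting) CollectI singletonD)
qed

lemma lab_bij: "bij_betw lab (leaves V A) X"
  using phylo_network by (simp add: phylo_network_def)

lemma lab_in_X: "l \<in> leaves V A \<Longrightarrow> lab l \<in> X"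
  using bij_betw_apply[OF lab_bij] .

lemma labelled_leaf: "k \<in> X \<Longrightarrow> \<exists>l \<in> leaves V A. lab l = k"
  using lab_bij by (auto simp: bij_betw_def)

lemma lab_range: "l \<in> leaves V A \<Longrightarrow> lab l \<in> {1..n}"
  using phylo_network lab_in_X unfolding phylo_network_def by blast

lemma lab_eq_iff: "l \<in> leaves V A \<Longrightarrow> l' \<in> leaves V A \<Longrightarrow> lab l = lab l' \<longleftrightarrow> l = l'"
  using lab_bij by (auto simp: bij_betw_def inj_on_eq_iff)

lemma leaf_no_successor:
  "is_leaf A l \<Longrightarrow> (l, c) \<notin> A"
  using finite_successors[OF finite_A] by (auto simp: is_leaf_def outdeg_def)

lemma leaf_parent_unique:
  assumes "is_leaf A l" "(p, l) \<in> A"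
  shows "{c. (c, l) \<in> A} = {p}"
proof -
  obtain x where "{c. (c, l) \<in> A} = {x}"
    using assms(1) by (auto simp: is_leaf_def indeg_def card_1_singleton_iff)
  with assms(2) show ?thesis by auto
qed

lemma ret_child: "is_ret A h \<Longrightarrow> \<exists>d. {c. (h, c) \<in> A} = {d}"
  by (simp add: is_ret_def outdeg_def card_1_singleton_iff)

lemma ret_parents: "is_ret A h \<Longrightarrow> \<exists>x y. x \<noteq> y \<and> {c. (c, h) \<in> A} = {x, y}"
  by (auto simp: is_ret_def indeg_def card_2_iff)

lemma tree_node_children: "is_tree_node A t \<Longrightarrow> \<exists>a b. a \<noteq> b \<and> {c. (t, c) \<in> A} = {a, b}"
  by (auto simp: is_tree_node_def outdeg_def card_2_iff)

lemma arc_target_not_root: "(x, v) \<in> A \<Longrightarrow> \<not> is_root A v"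
  using finite_successors[of "A\<inverse>" v] finite_A by (auto simp: is_root_def indeg_def)

lemma two_children_tree_node:
  assumes "(p, a) \<in> A" "(p, b) \<in> A" "a \<noteq> b"
  shows "is_tree_node A p \<and> {c. (p, c) \<in> A} = {a, b}"
proof -
  have "card {a, b} \<le> outdeg A p"
    unfolding outdeg_def using assms finite_successors[OF finite_A] by (intro card_mono) auto
  then have "2 \<le> outdeg A p" using assms(3) by simp
  then have "is_tree_node A p"
    using node_cases arc_nodes assms(1) by (fastforce simp: is_root_def is_leaf_def is_ret_def)
  moreover obtain a' b' where ab': "{c. (p, c) \<in> A} = {a', b'}"
    using tree_node_children \<open>is_tree_node A p\<close> by blast
  moreover have "a \<in> {a', b'}" "b \<in> {a', b'}" using assms(1,2) ab' by blast+
  ultimately show ?thesis using assms(3) by auto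
qed

lemma m_refl [simp]: "m v v = 1"
  by (rule npaths_refl[OF acyclic_A])

lemma m_unfold: "u \<noteq> v \<Longrightarrow> m u v = (\<Sum>c \<in> {c. (u, c) \<in> A}. m c v)"
  by (rule npaths_unfold[OF finite_A acyclic_A])

lemma m_unfold_pred: "u \<noteq> v \<Longrightarrow> m u v = (\<Sum>c \<in> {c. (c, v) \<in> A}. m u c)"
  by (rule npaths_unfold_pred[OF finite_A acyclic_A])

lemma m_pos_iff: "0 < m u v \<longleftrightarrow> (u, v) \<in> A\<^sup>*"
  by (rule npaths_pos_iff[OF finite_A acyclic_A])

lemma m_successor_le: "(u, c) \<in> A \<Longrightarrow> u \<noteq> v \<Longrightarrow> m c v \<le> m u v"
  by (rule npaths_successor_le[OF finite_A acyclic_A])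

lemma m_predecessor_le: "(c, v) \<in> A \<Longrightarrow> u \<noteq> v \<Longrightarrow> m u c \<le> m u v"
  by (rule npaths_predecessor_le[OF finite_A acyclic_A])

lemma m_from_leaf: "is_leaf A l \<Longrightarrow> m l v = (if v = l then 1 else 0)"
  using m_unfold[of l v] leaf_no_successor by auto

lemma reaches_leaf: "v \<in> V \<Longrightarrow> \<exists>l \<in> leaves V A. 0 < m v l"
  using finite_acyclic_wf_converse[OF finite_A acyclic_A]
proof (induction v rule: wf_induct_rule)
  case (less v)
  show ?case
  proof (cases "\<exists>c. (v, c) \<in> A")
    case True
    then obtain c l where "(v, c) \<in> A" "l \<in> leaves V A" "0 < m c l"
      using less arc_nodes by blast
    then show ?thesis by (meson converse_rtrancl_into_rtrancl m_pos_iff)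
  next
    case False
    then have "is_leaf A v" using node_cases[OF less.prems]
      by (auto simp: is_root_def is_tree_node_def is_ret_def outdeg_def)
    with less.prems show ?thesis by (auto simp: leaves_def intro!: bexI[of _ v])
  qed
qed

lemma reached_from_root: "v \<in> V \<Longrightarrow> \<exists>r \<in> V. is_root A r \<and> (r, v) \<in> A\<^sup>*"
  using finite_acyclic_wf[OF finite_A acyclic_A]
proof (induction v rule: wf_induct_rule)
  case (less v)
  show ?case
  proof (cases "is_root A v")
    case False
    then have "indeg A v \<noteq> 0" using node_cases[OF less.prems]
      by (auto simp: is_leaf_def is_tree_node_def is_ret_def)
    then have "{u. (u, v) \<in> A} \<noteq> {}" unfolding indeg_def by (metis card.empty)
    then obtain p r where "(p, v) \<in> A" "r \<in> V" "is_root A r" "(r, p) \<in> A\<^sup>*"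
      using less arc_nodes by blast
    then show ?thesis by (meson rtrancl.rtrancl_into_rtrancl)
  qed (use less.prems in blast)
qed

lemma root_child_not_ret:
  assumes r: "r \<in> V" "is_root A r" and rh: "(r, h) \<in> A"
  shows "\<not> is_ret A h"
proof
  assume "is_ret A h"
  then obtain x y where "x \<noteq> y" "{c. (c, h) \<in> A} = {x, y}" using ret_parents by blast
  then obtain q where q: "(q, h) \<in> A" "q \<noteq> r" by blast
  obtain r' where "r' \<in> V" "is_root A r'" "(r', q) \<in> A\<^sup>*"
    using reached_from_root arc_nodes q(1) by blast
  then have "(r, q) \<in> A\<^sup>+" using root_unique[of r r'] r q(2) by (auto simp: rtrancl_eq_or_trancl)
  then obtain z where z: "(r, z) \<in> A" "(z, q) \<in> A\<^sup>*" by (meson tranclD)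
  obtain w where "{c. (r, c) \<in> A} = {w}"
    using r(2) by (auto simp: is_root_def outdeg_def card_1_singleton_iff)
  then have "z = h" using z(1) rh by (metis (mono_tags, lifting) mem_Collect_eq singletonD)
  then have "(h, h) \<in> A\<^sup>+" using z(2) q(1) by (meson rtrancl_into_trancl1)
  then show False using acyclic_A by (simp add: acyclic_def)
qed

lemma VT_ancestor: "v \<in> V \<Longrightarrow> \<not> is_root A v \<Longrightarrow> \<exists>w \<in> VT V A. (w, v) \<in> A\<^sup>*"
  using finite_acyclic_wf[OF finite_A acyclic_A]
proof (induction v rule: wf_induct_rule)
  case (less v)
  show ?case
  proof (cases "v \<in> VT V A")
    case False
    then have "is_ret A v" using node_cases less.prems by (auto simp: VT_def)
    then obtain p where p: "(p, v) \<in> A" using ret_parents by blast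
    then have "p \<in> V" "\<not> is_root A p"
      using arc_nodes root_child_not_ret \<open>is_ret A v\<close> by blast+
    then obtain w where "w \<in> VT V A" "(w, p) \<in> A\<^sup>*" using less p by blast
    with p show ?thesis by (meson rtrancl.rtrancl_into_rtrancl)
  qed blast
qed

lemma ret_paths_leaf: "is_leaf A l \<Longrightarrow> ret_paths l = 0"
  using node_kinds_disjoint(1) by (auto simp: m_from_leaf VH_def intro!: sum.neutral)

lemma ret_paths_ret: "h \<in> VH V A \<Longrightarrow> 0 < ret_paths h"
  using member_le_sum[of h "VH V A" "m h"] finite_V by (force simp: VH_def)

lemma ret_paths_successor_le: "(u, c) \<in> A \<Longrightarrow> u \<notin> VH V A \<Longrightarrow> ret_paths c \<le> ret_paths u"
  by (intro sum_mono) (auto intro: m_successor_le)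

lemma tree_node_paths_to_only_leaf:
  assumes t: "is_tree_node A t" and l: "l \<in> leaves V A"
    and others: "\<forall>l' \<in> leaves V A. l' \<noteq> l \<longrightarrow> m t l' = 0"
  shows "2 \<le> m t l"
proof -
  obtain d1 d2 where d: "d1 \<noteq> d2" "{c. (t, c) \<in> A} = {d1, d2}"
    using tree_node_children[OF t] by blast
  have not_leaf: "t \<noteq> l'" if "l' \<in> leaves V A" for l'
    using that t node_kinds_disjoint by (auto simp: leaves_def)
  have pos: "0 < m d l" if td: "(t, d) \<in> A" for d
  proof -
    obtain l' where l': "l' \<in> leaves V A" "0 < m d l'"
      using reaches_leaf arc_nodes td by blast
    moreover have "m d l' \<le> m t l'" using m_successor_le td not_leaf l'(1) by blast
    ultimately show ?thesis using others by fastforce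
  qed
  have "(t, d1) \<in> A" "(t, d2) \<in> A" using d(2) by blast+
  then have "0 < m d1 l" "0 < m d2 l" using pos by blast+
  moreover have "m t l = m d1 l + m d2 l" using m_unfold[OF not_leaf[OF l]] d by simp
  ultimately show ?thesis by linarith
qed

definition unique_leaf_path :: "'v \<Rightarrow> 'v \<Rightarrow> bool" where
  "unique_leaf_path c l \<longleftrightarrow> m c l = 1 \<and> (\<forall>l' \<in> leaves V A. l' \<noteq> l \<longrightarrow> m c l' = 0)"

lemma single_path_non_ret_is_leaf:
  assumes "c \<in> V" "\<not> is_root A c" "\<not> is_ret A c" "l \<in> leaves V A" "unique_leaf_path c l"
  shows "c = l"
proof -
  have "\<not> is_tree_node A c"
    using tree_node_paths_to_only_leaf assms(4,5) by (fastforce simp: unique_leaf_path_def)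
  then have "is_leaf A c" using assms(1-3) node_cases by blast
  then show ?thesis using assms(5) by (simp add: unique_leaf_path_def m_from_leaf split: if_splits)
qed

lemma single_path_node_above_leaf:
  assumes c: "c \<in> V" "\<not> is_root A c" and l: "l \<in> leaves V A" and path: "unique_leaf_path c l"
    and "ret_paths c \<le> 1"
  shows "c = l \<or> (c \<in> VH V A \<and> (c, l) \<in> A)"
proof (cases "is_ret A c")
  case False
  then show ?thesis using single_path_non_ret_is_leaf assms by blast
next
  case True
  then obtain d where d: "{x. (c, x) \<in> A} = {d}" using ret_child by blast
  then have cd: "(c, d) \<in> A" by blast
  have "m d l' = m c l'" if "l' \<in> leaves V A" for l'
  proof -
    have "c \<noteq> l'" using that True node_kinds_disjoint(1) by (auto simp: leaves_def)
    then show ?thesis using m_unfold[of c l'] d by simp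
  qed
  then have d_path: "unique_leaf_path d l" using path l by (simp add: unique_leaf_path_def)
  have "\<not> is_ret A d"
  proof
    assume "is_ret A d"
    have "c \<noteq> d" using cd acyclic_A by (auto simp: acyclic_def)
    moreover have "{c, d} \<subseteq> VH V A" using True \<open>is_ret A d\<close> c arc_nodes cd by (auto simp: VH_def)
    ultimately have "m c c + m c d \<le> ret_paths c"
      using sum_mono2[of "VH V A" "{c, d}" "m c"] finite_V by (simp add: VH_def)
    moreover have "0 < m c d" using cd m_pos_iff by blast
    ultimately show False using \<open>ret_paths c \<le> 1\<close> by simp
  qed
  then have "d = l"
    using single_path_non_ret_is_leaf[of d l] d_path l arc_nodes arc_target_not_root cd by blast
  then show ?thesis using cd c True by (simp add: VH_def)
qed

lemma children_split_leaf_pair: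
  assumes u: "u \<notin> leaves V A" and ab: "a \<noteq> b" "{c. (u, c) \<in> A} = {a, b}"
    and li: "li \<in> leaves V A" and lj: "lj \<in> leaves V A" and "li \<noteq> lj"
    and paths: "m u li = 1" "m u lj = 1"
    and others: "\<forall>l \<in> leaves V A. l \<noteq> li \<and> l \<noteq> lj \<longrightarrow> m u l = 0"
  shows "unique_leaf_path a li \<and> unique_leaf_path b lj \<or> unique_leaf_path a lj \<and> unique_leaf_path b li"
proof -
  have m_split: "m u l = m a l + m b l" if "l \<in> leaves V A" for l
  proof -
    have "u \<noteq> l" using u that by blast
    then show ?thesis using m_unfold ab by simp
  qed
  have others_child: "m c l = 0" if "c \<in> {a, b}" "l \<in> leaves V A" "l \<noteq> li" "l \<noteq> lj" for c l
    using m_split[OF that(2)] others that by auto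
  have reaches: "0 < m c li \<or> 0 < m c lj" if "c \<in> {a, b}" for c
  proof -
    have "c \<in> V" using that ab(2) arc_nodes by blast
    then obtain l where l: "l \<in> leaves V A" "0 < m c l" using reaches_leaf by blast
    then have "l = li \<or> l = lj" using others_child[OF that l(1)] by (metis less_irrefl)
    with l(2) show ?thesis by auto
  qed
  have "m a li + m b li = 1" "m a lj + m b lj = 1" using m_split li lj paths by auto
  moreover have "0 < m a li \<or> 0 < m a lj" "0 < m b li \<or> 0 < m b lj" using reaches by auto
  ultimately have "m a li = 1 \<and> m a lj = 0 \<and> m b lj = 1 \<and> m b li = 0 \<or>
                   m a lj = 1 \<and> m a li = 0 \<and> m b li = 1 \<and> m b lj = 0"
    by presburger
  moreover have "unique_leaf_path c l" if "c \<in> {a, b}" "{l, l'} = {li, lj}" "m c l = 1" "m c l' = 0"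
    for c l l'
  proof -
    have "m c l'' = 0" if "l'' \<in> leaves V A" "l'' \<noteq> l" for l''
      using others_child[OF \<open>c \<in> {a, b}\<close> that(1)] \<open>{l, l'} = {li, lj}\<close> \<open>m c l' = 0\<close> that(2)
      by (cases "l'' = l'") (auto simp: doubleton_eq_iff)
    then show ?thesis using \<open>m c l = 1\<close> by (simp add: unique_leaf_path_def)
  qed
  ultimately show ?thesis by (metis insertI1 insert_commute)
qed

lemma two_leaf_node_children:
  assumes u: "u \<in> VT V A" and li: "li \<in> leaves V A" and lj: "lj \<in> leaves V A" and "li \<noteq> lj"
    and paths: "m u li = 1" "m u lj = 1"
    and others: "\<forall>l \<in> leaves V A. l \<noteq> li \<and> l \<noteq> lj \<longrightarrow> m u l = 0"
    and ret: "ret_paths u \<le> 1"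
  obtains a b where "is_tree_node A u" "{c. (u, c) \<in> A} = {a, b}"
    "a = li \<or> (a \<in> VH V A \<and> (a, li) \<in> A)" "b = lj \<or> (b \<in> VH V A \<and> (b, lj) \<in> A)"
    "ret_paths u = ret_paths a + ret_paths b"
proof -
  have tree: "is_tree_node A u"
  proof (rule ccontr)
    assume "\<not> is_tree_node A u"
    then have "is_leaf A u" using u by (simp add: VT_def)
    then have "li = u" "lj = u" using paths m_from_leaf[of u] by (metis zero_neq_one)+
    with \<open>li \<noteq> lj\<close> show False by simp
  qed
  obtain a b where ab: "a \<noteq> b" "{c. (u, c) \<in> A} = {a, b}" using tree_node_children[OF tree] by blast
  have u_not_ret: "u \<notin> VH V A" using tree node_kinds_disjoint by (auto simp: VH_def)
  have m_split: "m u v = m a v + m b v" if "u \<noteq> v" for v using m_unfold[OF that] ab by simp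
  have "ret_paths u = (\<Sum>h \<in> VH V A. m a h + m b h)"
    using u_not_ret by (intro sum.cong refl m_split) auto
  then have ret_split: "ret_paths u = ret_paths a + ret_paths b" by (simp add: sum.distrib)
  have link: "c = l \<or> (c \<in> VH V A \<and> (c, l) \<in> A)"
    if "c \<in> {a, b}" "l \<in> leaves V A" "unique_leaf_path c l" for c l
  proof (rule single_path_node_above_leaf[OF _ _ that(2,3)])
    show "c \<in> V" "\<not> is_root A c" using that(1) ab(2) arc_nodes arc_target_not_root by blast+
    show "ret_paths c \<le> 1"
      using ret_paths_successor_le[OF _ u_not_ret, of c] that(1) ab(2) ret by fastforce
  qed
  have "u \<notin> leaves V A" using tree node_kinds_disjoint by (auto simp: leaves_def)
  from children_split_leaf_pair[OF this ab li lj \<open>li \<noteq> lj\<close> paths others] show thesis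
  proof
    assume "unique_leaf_path a li \<and> unique_leaf_path b lj"
    then show thesis using that[OF tree ab(2)] link li lj ret_split by blast
  next
    assume "unique_leaf_path a lj \<and> unique_leaf_path b li"
    then show thesis using that[OF tree, of b a] ab(2) link li lj ret_split by (simp add: insert_commute)
  qed
qed

section \<open>Extended \<open>\<mu>\<close>-vectors and cherries\<close>

lemma mu_zero: "mu u 0 = ret_paths u"
  by (simp add: muvec_def)

lemma mu_lab:
  assumes "l \<in> leaves V A"
  shows "mu u (lab l) = m u l"
proof -
  have "{l' \<in> leaves V A. lab l' = lab l} = {l}" using assms lab_eq_iff by auto
  then show ?thesis using lab_range[OF assms] by (simp add: muvec_def)
qed

lemma mu_unlabelled:
  assumes "0 < k" "k \<notin> X"
  shows "mu u k = 0"
  using assms lab_in_X by (auto simp: muvec_def intro!: sum.neutral)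

lemma mu_eqI:
  assumes "f 0 = ret_paths u" and "\<And>l. l \<in> leaves V A \<Longrightarrow> f (lab l) = m u l"
    and "\<And>k. 0 < k \<Longrightarrow> k \<notin> X \<Longrightarrow> f k = 0"
  shows "mu u = f"
proof
  fix k
  show "mu u k = f k"
  proof (cases "k \<in> X")
    case True
    then obtain l where "l \<in> leaves V A" "lab l = k" using labelled_leaf by blast
    then show ?thesis using assms(2) mu_lab by metis
  next
    case False
    then show ?thesis using assms(1,3) mu_zero mu_unlabelled by (cases "k = 0") auto
  qed
qed

lemma mu_leaf:
  assumes l: "l \<in> leaves V A"
  shows "mu l = delta {lab l}"
proof (rule mu_eqI)
  have "is_leaf A l" using l by (simp add: leaves_def)
  then show "delta {lab l} 0 = ret_paths l"
    using ret_paths_leaf lab_range[OF l] by (simp add: delta_def)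
  show "delta {lab l} (lab l') = m l l'" if "l' \<in> leaves V A" for l'
    using m_from_leaf[OF \<open>is_leaf A l\<close>] lab_eq_iff[OF that l] by (simp add: delta_def)
  show "delta {lab l} k = 0" if "k \<notin> X" for k
    using that lab_in_X[OF l] by (auto simp: delta_def)
qed

lemma mu_lab_via_parent:
  assumes l: "l \<in> leaves V A" and "(p, l) \<in> A" "u \<noteq> l"
  shows "mu u (lab l) = m u p"
proof -
  have "{c. (c, l) \<in> A} = {p}" using leaf_parent_unique assms l by (simp add: leaves_def)
  then show ?thesis using mu_lab[OF l] m_unfold_pred[OF assms(3)] by simp
qed

lemma finite_VT: "finite (VT V A)"
  using finite_V by (simp add: VT_def)

lemma mem_mu_multiset: "x \<in># mu_multiset n V A lab \<longleftrightarrow> (\<exists>u \<in> VT V A. x = mu u)"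
  using finite_VT by (auto simp: mu_multiset_def)

lemma count_mu_multiset: "count (mu_multiset n V A lab) x = card {u \<in> VT V A. mu u = x}"
  using finite_VT
  by (simp add: mu_multiset_def count_image_mset Int_commute vimage_def Collect_conj_eq)

lemma count_mu_multiset_eq_1:
  assumes "v \<in> VT V A" and "\<And>u. u \<in> VT V A \<Longrightarrow> mu u = mu v \<Longrightarrow> u = v"
  shows "count (mu_multiset n V A lab) (mu v) = 1"
proof -
  have "{u \<in> VT V A. mu u = mu v} = {v}" using assms by auto
  then show ?thesis by (simp add: count_mu_multiset)
qed

lemma mu_cherry_parent:
  assumes li: "li \<in> leaves V A" and lj: "lj \<in> leaves V A" and "li \<noteq> lj"
    and "(p, li) \<in> A" "(p, lj) \<in> A"
  shows "mu p = delta {lab li, lab lj}"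
proof -
  have p: "is_tree_node A p" "{c. (p, c) \<in> A} = {li, lj}"
    using two_children_tree_node assms(3-5) by blast+
  have leaf: "is_leaf A li" "is_leaf A lj" using li lj by (simp_all add: leaves_def)
  have m_p: "m p v = m li v + m lj v" if "p \<noteq> v" for v
    using m_unfold[OF that] p(2) \<open>li \<noteq> lj\<close> by simp
  have p_not_leaf: "p \<noteq> l" if "l \<in> leaves V A" for l
    using that p(1) node_kinds_disjoint by (auto simp: leaves_def)
  show ?thesis
  proof (rule mu_eqI)
    have "m p h = 0" if "h \<in> VH V A" for h
    proof -
      have "p \<noteq> h" "h \<noteq> li" "h \<noteq> lj"
        using that p(1) leaf node_kinds_disjoint by (auto simp: VH_def)
      then show ?thesis using m_p m_from_leaf[OF leaf(1)] m_from_leaf[OF leaf(2)] by simp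
    qed
    then show "delta {lab li, lab lj} 0 = ret_paths p"
      using lab_range[OF li] lab_range[OF lj] by (simp add: delta_def)
    show "delta {lab li, lab lj} (lab l) = m p l" if "l \<in> leaves V A" for l
      using m_p[OF p_not_leaf[OF that]] m_from_leaf[OF leaf(1)] m_from_leaf[OF leaf(2)]
        lab_eq_iff[OF that li] lab_eq_iff[OF that lj] \<open>li \<noteq> lj\<close>
      by (auto simp: delta_def)
    show "delta {lab li, lab lj} k = 0" if "k \<notin> X" for k
      using that lab_in_X li lj by (auto simp: delta_def)
  qed
qed

lemma mu_ret_cherry_parent:
  assumes li: "li \<in> leaves V A" and lj: "lj \<in> leaves V A" and "li \<noteq> lj"
    and hli: "(h, li) \<in> A" and h: "is_ret A h" and "(p, h) \<in> A" "(p, lj) \<in> A"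
  shows "mu p = delta {0, lab li, lab lj}"
proof -
  have leaf: "is_leaf A li" "is_leaf A lj" using li lj by (simp_all add: leaves_def)
  have "h \<noteq> lj" using h leaf node_kinds_disjoint by blast
  then have p: "is_tree_node A p" "{c. (p, c) \<in> A} = {h, lj}"
    using two_children_tree_node assms(6,7) by blast+
  obtain d where "{c. (h, c) \<in> A} = {d}" using ret_child[OF h] by blast
  then have h_child: "{c. (h, c) \<in> A} = {li}" using hli by auto
  have m_p: "m p v = m h v + m lj v" if "p \<noteq> v" for v
    using m_unfold[OF that] p(2) \<open>h \<noteq> lj\<close> by simp
  have m_h: "m h v = m li v" if "h \<noteq> v" for v
    using m_unfold[OF that] h_child by simp
  have p_not: "p \<noteq> v" if "v \<in> leaves V A \<or> v \<in> VH V A" for v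
    using that p(1) node_kinds_disjoint by (auto simp: leaves_def VH_def)
  show ?thesis
  proof (rule mu_eqI)
    have "m p x = (if x = h then 1 else 0)" if "x \<in> VH V A" for x
    proof -
      have "x \<noteq> li" "x \<noteq> lj" using that leaf node_kinds_disjoint by (auto simp: VH_def)
      then show ?thesis
        using m_p[OF p_not] m_h m_from_leaf[OF leaf(1)] m_from_leaf[OF leaf(2)] that by auto
    qed
    moreover have "h \<in> VH V A" using h arc_nodes hli by (simp add: VH_def)
    ultimately have "ret_paths p = 1" using finite_V by (simp add: VH_def)
    then show "delta {0, lab li, lab lj} 0 = ret_paths p" by (simp add: delta_def)
    show "delta {0, lab li, lab lj} (lab l) = m p l" if "l \<in> leaves V A" for l
    proof -
      have "h \<noteq> l" using that h node_kinds_disjoint by (auto simp: leaves_def)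
      then show ?thesis
        using m_p[OF p_not] m_h m_from_leaf[OF leaf(1)] m_from_leaf[OF leaf(2)] that
          lab_range[OF that] lab_eq_iff[OF that li] lab_eq_iff[OF that lj] \<open>li \<noteq> lj\<close>
        by (auto simp: delta_def)
    qed
    show "delta {0, lab li, lab lj} k = 0" if "0 < k" "k \<notin> X" for k
      using that lab_in_X li lj by (auto simp: delta_def)
  qed
qed

lemma mu_eq_delta_leaf_pair:
  assumes u: "u \<in> VT V A" and mu_u: "mu u = delta D" and D: "{i, j} \<subseteq> D" "D \<subseteq> {0, i, j}"
    and "i \<noteq> j" "0 < i" "0 < j"
  obtains li lj a b where "li \<in> leaves V A" "lab li = i" "lj \<in> leaves V A" "lab lj = j"
    "is_tree_node A u" "{c. (u, c) \<in> A} = {a, b}"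
    "a = li \<or> (a \<in> VH V A \<and> (a, li) \<in> A)" "b = lj \<or> (b \<in> VH V A \<and> (b, lj) \<in> A)"
    "ret_paths a + ret_paths b = delta D 0"
proof -
  have "mu u i = 1" "mu u j = 1" using mu_u D(1) by (auto simp: delta_def)
  then have "i \<in> X" "j \<in> X"
    using mu_unlabelled[of i u] mu_unlabelled[of j u] \<open>0 < i\<close> \<open>0 < j\<close> by (metis zero_neq_one)+
  then obtain li lj where li: "li \<in> leaves V A" "lab li = i" and lj: "lj \<in> leaves V A" "lab lj = j"
    using labelled_leaf by blast
  have "li \<noteq> lj" using li lj \<open>i \<noteq> j\<close> by auto
  have paths: "m u li = 1" "m u lj = 1"
    using \<open>mu u i = 1\<close> \<open>mu u j = 1\<close> mu_lab[OF li(1), of u] mu_lab[OF lj(1), of u] li(2) lj(2)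
    by simp_all
  have others: "\<forall>l \<in> leaves V A. l \<noteq> li \<and> l \<noteq> lj \<longrightarrow> m u l = 0"
  proof (intro ballI impI)
    fix l assume l: "l \<in> leaves V A" "l \<noteq> li \<and> l \<noteq> lj"
    then have "lab l \<noteq> i" "lab l \<noteq> j"
      using lab_eq_iff[OF l(1) li(1)] lab_eq_iff[OF l(1) lj(1)] li(2) lj(2) by auto
    moreover have "lab l \<noteq> 0" using lab_range[OF l(1)] by simp
    ultimately have "lab l \<notin> D" using D(2) by auto
    then show "m u l = 0" using mu_lab[OF l(1), of u] mu_u by (simp add: delta_def)
  qed
  have ret_u: "ret_paths u = delta D 0" using mu_zero[of u] mu_u by simp
  then have "ret_paths u \<le> 1" by (simp add: delta_def)
  then obtain a b where ab: "is_tree_node A u" "{c. (u, c) \<in> A} = {a, b}"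
    "a = li \<or> (a \<in> VH V A \<and> (a, li) \<in> A)" "b = lj \<or> (b \<in> VH V A \<and> (b, lj) \<in> A)"
    "ret_paths u = ret_paths a + ret_paths b"
    using two_leaf_node_children[OF u li(1) lj(1) \<open>li \<noteq> lj\<close> paths others] by blast
  show thesis using that[OF li lj ab(1-4)] ab(5) ret_u by simp
qed

lemma mu_eq_delta_cherry:
  assumes "u \<in> VT V A" "mu u = delta {i, j}" "i \<noteq> j" "0 < i" "0 < j"
  obtains li lj where "li \<in> leaves V A" "lab li = i" "lj \<in> leaves V A" "lab lj = j"
    "(u, li) \<in> A" "(u, lj) \<in> A"
proof -
  have D: "{i, j} \<subseteq> {i, j}" "{i, j} \<subseteq> {0, i, j}" by auto
  obtain li lj a b where shape: "li \<in> leaves V A" "lab li = i" "lj \<in> leaves V A" "lab lj = j"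
    "is_tree_node A u" "{c. (u, c) \<in> A} = {a, b}"
    "a = li \<or> (a \<in> VH V A \<and> (a, li) \<in> A)" "b = lj \<or> (b \<in> VH V A \<and> (b, lj) \<in> A)"
    "ret_paths a + ret_paths b = delta {i, j} 0"
    by (rule mu_eq_delta_leaf_pair[OF assms(1,2) D assms(3-5)])
  have "ret_paths a = 0" "ret_paths b = 0" using shape(9) assms(4,5) by (auto simp: delta_def)
  then have "a = li" "b = lj" using shape(7,8) ret_paths_ret[of a] ret_paths_ret[of b] by auto
  moreover have "(u, a) \<in> A" "(u, b) \<in> A" using shape(6) by blast+
  ultimately show thesis using that shape(1-4) by blast
qed

lemma mu_eq_delta_ret_cherry:
  assumes "u \<in> VT V A" "mu u = delta {0, i, j}" "i \<noteq> j" "0 < i" "0 < j"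
  obtains li lj h where "li \<in> leaves V A" "lab li = i" "lj \<in> leaves V A" "lab lj = j"
    "is_tree_node A u" "(u, h) \<in> A" "is_ret A h"
    "(h, li) \<in> A \<and> (u, lj) \<in> A \<or> (h, lj) \<in> A \<and> (u, li) \<in> A"
proof -
  have D: "{i, j} \<subseteq> {0, i, j}" "{0, i, j} \<subseteq> {0, i, j}" by auto
  obtain li lj a b where shape: "li \<in> leaves V A" "lab li = i" "lj \<in> leaves V A" "lab lj = j"
    "is_tree_node A u" "{c. (u, c) \<in> A} = {a, b}"
    "a = li \<or> (a \<in> VH V A \<and> (a, li) \<in> A)" "b = lj \<or> (b \<in> VH V A \<and> (b, lj) \<in> A)"
    "ret_paths a + ret_paths b = delta {0, i, j} 0"
    by (rule mu_eq_delta_leaf_pair[OF assms(1,2) D assms(3-5)])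
  have sum: "ret_paths a + ret_paths b = 1" using shape(9) by (simp add: delta_def)
  have "ret_paths li = 0" "ret_paths lj = 0"
    using ret_paths_leaf shape(1,3) by (simp_all add: leaves_def)
  then have "a \<in> VH V A \<and> (a, li) \<in> A \<and> b = lj \<or> b \<in> VH V A \<and> (b, lj) \<in> A \<and> a = li"
    using shape(7,8) sum ret_paths_ret[of a] ret_paths_ret[of b] by auto
  moreover have "(u, a) \<in> A" "(u, b) \<in> A" using shape(6) by blast+
  ultimately show thesis using that[OF shape(1-5)] by (auto simp: VH_def)
qed

text \<open>This excludes the orientation (j, i) when (i, j) is a reticulated cherry of \<open>\<mu>(N)\<close>.\<close>

lemma ret_above_leaf_inversion:
  assumes li: "li \<in> leaves V A" and lj: "lj \<in> leaves V A"
    and uli: "(u, li) \<in> A" and uh: "(u, h) \<in> A" and h: "is_ret A h" and hlj: "(h, lj) \<in> A"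
  obtains w where "w \<in> VT V A" "mu w (lab li) < mu w (lab lj)" "0 < mu w 0"
proof -
  obtain x y where xy: "x \<noteq> y" "{c. (c, h) \<in> A} = {x, y}" using ret_parents[OF h] by blast
  then obtain q where q: "(q, h) \<in> A" "q \<noteq> u" by blast
  have "u \<in> {x, y}" "q \<in> {x, y}" using xy(2) uh q(1) by blast+
  then have h_parents: "{c. (c, h) \<in> A} = {u, q}" using xy q(2) by auto
  have "q \<in> V" "\<not> is_root A q" using arc_nodes q(1) root_child_not_ret h by blast+
  then obtain w where w: "w \<in> VT V A" "(w, q) \<in> A\<^sup>*" using VT_ancestor by blast
  have "w \<noteq> h" using w(1) h node_kinds_disjoint by (auto simp: VT_def)
  have w_not_leaf: "w \<noteq> l" if "l \<in> leaves V A" for l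
  proof
    assume "w = l"
    then have "is_leaf A w" using that by (simp add: leaves_def)
    moreover have "0 < m w q" using w(2) m_pos_iff by blast
    ultimately have "q = w" using m_from_leaf by (metis less_irrefl)
    then show False using q(1) leaf_no_successor \<open>is_leaf A w\<close> by blast
  qed
  have "mu w (lab li) = m w u" using mu_lab_via_parent[OF li uli w_not_leaf[OF li]] .
  moreover have "mu w (lab lj) = m w h" using mu_lab_via_parent[OF lj hlj w_not_leaf[OF lj]] .
  moreover have "m w h = m w u + m w q" using m_unfold_pred[OF \<open>w \<noteq> h\<close>] h_parents q(2) by simp
  moreover have "0 < m w q" using w(2) m_pos_iff by blast
  moreover have "m w h \<le> mu w 0"
    using mu_zero member_le_sum[of h "VH V A" "m w"] finite_V h arc_nodes hlj by (simp add: VH_def)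
  ultimately show thesis using that w(1) by simp
qed

lemma mu_ordered_at_ret_cherry:
  assumes li: "li \<in> leaves V A" and lj: "lj \<in> leaves V A"
    and hli: "(h, li) \<in> A" and h: "is_ret A h" and ph: "(p, h) \<in> A" and plj: "(p, lj) \<in> A"
    and u: "u \<in> VT V A" "u \<noteq> li" "u \<noteq> lj"
  shows "mu u (lab li) \<le> mu u 0 \<and> mu u (lab lj) \<le> mu u (lab li)"
proof -
  have "mu u (lab li) = m u h" "mu u (lab lj) = m u p"
    using mu_lab_via_parent[OF li hli u(2)] mu_lab_via_parent[OF lj plj u(3)] .
  moreover have "u \<noteq> h" using u(1) h node_kinds_disjoint by (auto simp: VT_def)
  then have "m u p \<le> m u h" using m_predecessor_le ph by blast
  moreover have "m u h \<le> mu u 0"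
    using mu_zero member_le_sum[of h "VH V A" "m u"] finite_V h arc_nodes ph by (simp add: VH_def)
  ultimately show ?thesis by simp
qed

lemma ms_cherry_if_net_cherry:
  assumes "net_cherry V A lab i j"
  shows "ms_cherry (mu_multiset n V A lab) i j"
proof -
  obtain li lj p where li: "li \<in> leaves V A" "lab li = i" and lj: "lj \<in> leaves V A" "lab lj = j"
    and arcs: "(p, li) \<in> A" "(p, lj) \<in> A" and "i \<noteq> j"
    using assms by (auto simp: net_cherry_def)
  have "li \<noteq> lj" using li lj \<open>i \<noteq> j\<close> by auto
  have "0 < i" "0 < j" using lab_range[OF li(1)] lab_range[OF lj(1)] li(2) lj(2) by auto
  have mu_p: "mu p = delta {i, j}" using mu_cherry_parent[OF li(1) lj(1) \<open>li \<noteq> lj\<close> arcs] li lj by simp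
  have parent_li: "{c. (c, li) \<in> A} = {p}" using leaf_parent_unique li(1) arcs(1) by (simp add: leaves_def)
  have "p \<in> VT V A"
    using two_children_tree_node[OF arcs \<open>li \<noteq> lj\<close>] arc_nodes arcs by (simp add: VT_def)
  moreover have "u = p" if u: "u \<in> VT V A" "mu u = mu p" for u
  proof -
    obtain li' lj' where "li' \<in> leaves V A" "lab li' = i" "lj' \<in> leaves V A" "lab lj' = j"
      "(u, li') \<in> A" "(u, lj') \<in> A"
      using mu_eq_delta_cherry[OF u(1) _ \<open>i \<noteq> j\<close> \<open>0 < i\<close> \<open>0 < j\<close>] u(2) mu_p by metis
    then have "(u, li) \<in> A" using lab_eq_iff li by metis
    then show "u = p" using parent_li by blast
  qed
  ultimately have "count (mu_multiset n V A lab) (delta {i, j}) = 1"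
    using count_mu_multiset_eq_1 mu_p by metis
  moreover have "x i = x j" if x: "x \<in># mu_multiset n V A lab" "x \<noteq> delta {i}" "x \<noteq> delta {j}" for x
  proof -
    obtain u where u: "u \<in> VT V A" "x = mu u" using x(1) mem_mu_multiset by blast
    then have "u \<noteq> li" "u \<noteq> lj"
      using x(2,3) mu_leaf[OF li(1)] mu_leaf[OF lj(1)] li(2) lj(2) by metis+
    then have "mu u (lab li) = m u p" "mu u (lab lj) = m u p"
      using mu_lab_via_parent[OF li(1) arcs(1)] mu_lab_via_parent[OF lj(1) arcs(2)] by blast+
    then show ?thesis using u(2) li(2) lj(2) by simp
  qed
  ultimately show ?thesis by (simp add: ms_cherry_def)
qed

lemma ms_ret_cherry_if_net_ret_cherry:
  assumes "net_ret_cherry V A lab i j"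
  shows "ms_ret_cherry (mu_multiset n V A lab) i j"
proof -
  obtain li lj h p where li: "li \<in> leaves V A" "lab li = i" and lj: "lj \<in> leaves V A" "lab lj = j"
    and hli: "(h, li) \<in> A" and plj: "(p, lj) \<in> A" and h: "is_ret A h"
    and p: "p \<in> V" "is_tree_node A p" and ph: "(p, h) \<in> A" and "i \<noteq> j"
    using assms by (auto simp: net_ret_cherry_def)
  have "li \<noteq> lj" using li lj \<open>i \<noteq> j\<close> by auto
  have mu_p: "mu p = delta {0, i, j}"
    using mu_ret_cherry_parent[OF li(1) lj(1) \<open>li \<noteq> lj\<close> hli h ph plj] li lj by simp
  have parents: "{c. (c, li) \<in> A} = {h}" "{c. (c, lj) \<in> A} = {p}"
    using leaf_parent_unique li(1) lj(1) hli plj by (simp_all add: leaves_def)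
  have "0 < i" "0 < j" using lab_range[OF li(1)] lab_range[OF lj(1)] li(2) lj(2) by auto
  have "p \<in> VT V A" using p by (simp add: VT_def)
  moreover have "u = p" if u: "u \<in> VT V A" "mu u = mu p" for u
  proof -
    have "mu u = delta {0, i, j}" using u(2) mu_p by simp
    then obtain li' lj' h' where "li' \<in> leaves V A" "lab li' = i" "lj' \<in> leaves V A" "lab lj' = j"
      "is_tree_node A u" "(u, h') \<in> A" "is_ret A h'"
      "(h', li') \<in> A \<and> (u, lj') \<in> A \<or> (h', lj') \<in> A \<and> (u, li') \<in> A"
      by (rule mu_eq_delta_ret_cherry[OF u(1) _ \<open>i \<noteq> j\<close> \<open>0 < i\<close> \<open>0 < j\<close>])
    then have "is_tree_node A u" "(u, lj) \<in> A \<or> (u, li) \<in> A"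
      using lab_eq_iff li lj by metis+
    moreover have "u \<noteq> h" using \<open>is_tree_node A u\<close> h node_kinds_disjoint by blast
    ultimately show "u = p" using parents by blast
  qed
  ultimately have "count (mu_multiset n V A lab) (delta {0, i, j}) = 1"
    using count_mu_multiset_eq_1 mu_p by metis
  moreover have "x i \<le> x 0 \<and> x j \<le> x i"
    if x: "x \<in># mu_multiset n V A lab" "x \<noteq> delta {i}" "x \<noteq> delta {j}" for x
  proof -
    obtain u where u: "u \<in> VT V A" "x = mu u" using x(1) mem_mu_multiset by blast
    then have "u \<noteq> li" "u \<noteq> lj"
      using x(2,3) mu_leaf[OF li(1)] mu_leaf[OF lj(1)] li(2) lj(2) by metis+
    then show ?thesis
      using mu_ordered_at_ret_cherry[OF li(1) lj(1) hli h ph plj u(1)] li(2) lj(2) u(2) by simp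
  qed
  ultimately show ?thesis by (simp add: ms_ret_cherry_def)
qed

lemma net_cherry_if_ms_cherry:
  assumes "ms_cherry (mu_multiset n V A lab) i j" "i \<noteq> j" "0 < i" "0 < j"
  shows "net_cherry V A lab i j"
proof -
  have "delta {i, j} \<in># mu_multiset n V A lab"
    using assms(1) by (simp add: ms_cherry_def flip: count_greater_zero_iff)
  then obtain u where "u \<in> VT V A" "mu u = delta {i, j}" using mem_mu_multiset by metis
  then obtain li lj where "li \<in> leaves V A" "lab li = i" "lj \<in> leaves V A" "lab lj = j"
    "(u, li) \<in> A" "(u, lj) \<in> A"
    by (rule mu_eq_delta_cherry[OF _ _ assms(2-4)])
  with assms(2) show ?thesis by (auto simp: net_cherry_def)
qed

lemma net_ret_cherry_if_ms_ret_cherry: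
  assumes ms: "ms_ret_cherry (mu_multiset n V A lab) i j" and "i \<noteq> j" "0 < i" "0 < j"
  shows "net_ret_cherry V A lab i j"
proof -
  have "delta {0, i, j} \<in># mu_multiset n V A lab"
    using ms by (simp add: ms_ret_cherry_def flip: count_greater_zero_iff)
  then obtain u where u: "u \<in> VT V A" "mu u = delta {0, i, j}" using mem_mu_multiset by metis
  then obtain li lj h where li: "li \<in> leaves V A" "lab li = i" and lj: "lj \<in> leaves V A" "lab lj = j"
    and u_tree: "is_tree_node A u" and uh: "(u, h) \<in> A" and h: "is_ret A h"
    and arcs: "(h, li) \<in> A \<and> (u, lj) \<in> A \<or> (h, lj) \<in> A \<and> (u, li) \<in> A"
    by (rule mu_eq_delta_ret_cherry[OF _ _ assms(2-4)])
  show ?thesis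
  proof (cases "(h, li) \<in> A \<and> (u, lj) \<in> A")
    case True
    then show ?thesis using li lj u_tree uh h arc_nodes \<open>i \<noteq> j\<close>
      unfolding net_ret_cherry_def by blast
  next
    case False
    with arcs have "(u, li) \<in> A" "(h, lj) \<in> A" by blast+
    then obtain w where w: "w \<in> VT V A" "mu w (lab li) < mu w (lab lj)" "0 < mu w 0"
      by (rule ret_above_leaf_inversion[OF li(1) lj(1) _ uh h])
    have "mu w \<noteq> delta {i}" "mu w \<noteq> delta {j}"
      using w(3) \<open>0 < i\<close> \<open>0 < j\<close> by (auto simp: delta_def)
    moreover have "mu w \<in># mu_multiset n V A lab" using w(1) mem_mu_multiset by blast
    ultimately have "mu w j \<le> mu w i" using ms by (simp add: ms_ret_cherry_def)
    with w(2) li(2) lj(2) show ?thesis by simp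
  qed
qed

end

theorem mainTheorem6:
  fixes n :: nat and X :: "nat set" and V :: "'v set" and A :: "('v \<times> 'v) set"
    and lab :: "'v \<Rightarrow> nat" and i j :: nat
  assumes "phylo_network n X V A lab"
    and "i \<in> {1..n}" and "j \<in> {1..n}" and "i \<noteq> j"
  shows "(net_cherry V A lab i j \<or> net_ret_cherry V A lab i j) \<longleftrightarrow>
         (ms_cherry (mu_multiset n V A lab) i j \<or> ms_ret_cherry (mu_multiset n V A lab) i j)"
proof -
  interpret phylo_net n X V A lab using assms(1) by unfold_locales
  have "0 < i" "0 < j" using assms(2,3) by auto
  with assms(4) show ?thesis
    using ms_cherry_if_net_cherry ms_ret_cherry_if_net_ret_cherry
      net_cherry_if_ms_cherry net_ret_cherry_if_ms_ret_cherry by blast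
qed

end
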